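(* Let $k\ge3$ and $m\ge1$ be integers, let $\alpha\in(0,1)$, and let $F$ be a $k$-partite $k$-graph each of whose parts has exactly $m$ vertices. There exist $\eta>0$ and $n_0$ such that for every $n\ge n_0$ the following holds: if $H$ is a $k$-partite $k$-graph each of whose parts has exactly $n$ vertices and $\delta'_{k-1}(H)\ge\alpha n$, then every vertex $v\in V(H)$ is contained in at least $\eta n^{km-1}$ copies of $F$ in $H$.
   Context: A $k$-partite $k$-graph $H$ is a $k$-graph with a fixed partition $V(H)=V_1\cup\dots\cup V_k$ (its parts) such that every edge meets each $V_i$ in at most one vertex. A set $S$ is legal if $|S\cap V_i|\le1$ for all $i$. $\deg_H(S)$ is the number of $(k-|S|)$-sets $S'$ with $S\cup S'\in E(H)$; $\delta'_{k-1}(H)$ is the minimum of $\deg_H(S)$ over legal $(k-1)$-sets $S$. A copy of $F$ in $H$ is a subgraph of $H$ isomorphic to $F$. *)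

theory Defs
  imports Complex_Main
begin

definition vset :: "nat \<Rightarrow> (nat \<Rightarrow> 'a set) \<Rightarrow> 'a set" where
  "vset k P = (\<Union>i<k. P i)"

definition kpartite_kgraph :: "nat \<Rightarrow> (nat \<Rightarrow> 'a set) \<Rightarrow> 'a set set \<Rightarrow> bool" where
  "kpartite_kgraph k P E \<longleftrightarrow>
     (\<forall>i<k. finite (P i)) \<and>
     (\<forall>i<k. \<forall>j<k. i \<noteq> j \<longrightarrow> P i \<inter> P j = {}) \<and>
     (\<forall>e\<in>E. e \<subseteq> vset k P \<and> card e = k \<and> (\<forall>i<k. card (e \<inter> P i) \<le> 1))"

definition legal :: "nat \<Rightarrow> (nat \<Rightarrow> 'a set) \<Rightarrow> 'a set \<Rightarrow> bool" where
  "legal k P S \<longleftrightarrow> (\<forall>i<k. card (S \<inter> P i) \<le> 1)"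

definition deg :: "nat \<Rightarrow> 'a set set \<Rightarrow> 'a set \<Rightarrow> nat" where
  "deg k E S = card {S'. card S' = k - card S \<and> S \<union> S' \<in> E}"

definition min_codeg :: "nat \<Rightarrow> (nat \<Rightarrow> 'a set) \<Rightarrow> 'a set set \<Rightarrow> nat" where
  "min_codeg k P E =
     Min (deg k E ` {S. S \<subseteq> vset k P \<and> card S = k - 1 \<and> legal k P S})"

definition hg_iso :: "'a set \<Rightarrow> 'a set set \<Rightarrow> 'b set \<Rightarrow> 'b set set \<Rightarrow> bool" where
  "hg_iso V1 E1 V2 E2 \<longleftrightarrow>
     (\<exists>f. bij_betw f V1 V2 \<and> bij_betw (\<lambda>e. f ` e) E1 E2)"

definition copies :: "'a set \<Rightarrow> 'a set set \<Rightarrow> 'b set \<Rightarrow> 'b set set \<Rightarrow> ('a set \<times> 'a set set) set" where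
  "copies V E VF EF =
     {(W, E'). W \<subseteq> V \<and> E' \<subseteq> E \<and> (\<forall>e\<in>E'. e \<subseteq> W) \<and> hg_iso W E' VF EF}"

end

theory Submission
  imports Defs "HOL-Library.FuncSet" "HOL-Combinatorics.Transposition"
begin

text \<open>Put the part of \<open>v\<close> last and encode a copy of the complete \<open>k\<close>-partite \<open>k\<close>-graph with parts
  of size \<open>m\<close> as a grid: \<open>k\<close> rows of \<open>m\<close> vertices, row \<open>i\<close> in part \<open>i\<close>, all of whose transversals
  are edges. Such a complete grid with distinct entries spans a copy of \<open>F\<close>. By Erd\H{o}s' argument
  (induction on the number of rows, using the power mean inequality to average over the last row)
  an \<open>r\<close>-partite relation of density \<open>d\<close> has at least \<open>d ^ (m ^ r) n ^ (m r)\<close> complete grids. The codegree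
  condition gives density \<open>\<alpha>\<^sup>2\<close> to the edges \<open>s\<close> for which \<open>s\<close> with its last vertex replaced by \<open>v\<close> is
  also an edge, and running the last averaging step for this relation yields
  \<open>\<alpha> ^ (2 m ^ k) n ^ (k m - 1)\<close> complete grids whose last row starts with \<open>v\<close>. Grids with a repeated
  entry number only \<open>O(n ^ (k m - 2))\<close>, and a vertex set arises from at most \<open>(k m) ^ (k m)\<close> grids.\<close>

lemma sum_mult_sum_le_card_mult_sum:
  fixes f g :: "'i \<Rightarrow> real"
  assumes "finite I" and "\<And>i j. i \<in> I \<Longrightarrow> j \<in> I \<Longrightarrow> 0 \<le> (f i - f j) * (g i - g j)"
  shows "(\<Sum>i\<in>I. f i) * (\<Sum>i\<in>I. g i) \<le> real (card I) * (\<Sum>i\<in>I. f i * g i)"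
proof -
  have "0 \<le> (\<Sum>i\<in>I. \<Sum>j\<in>I. (f i - f j) * (g i - g j))"
    using assms by (intro sum_nonneg) auto
  also have "\<dots> = 2 * (real (card I) * (\<Sum>i\<in>I. f i * g i) - (\<Sum>i\<in>I. f i) * (\<Sum>i\<in>I. g i))"
    by (simp add: algebra_simps sum.distrib sum_subtractf sum_distrib_left sum_distrib_right
        sum.swap[of "\<lambda>i j. f j * g i"])
  finally show ?thesis by simp
qed

lemma sum_power_le_card_power_mult_sum_power:
  fixes f :: "'i \<Rightarrow> real"
  assumes "finite I" and "\<And>i. i \<in> I \<Longrightarrow> 0 \<le> f i" and "p \<ge> 1"
  shows "(\<Sum>i\<in>I. f i) ^ p \<le> real (card I) ^ (p - 1) * (\<Sum>i\<in>I. f i ^ p)"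
proof -
  have "(\<Sum>i\<in>I. f i) ^ Suc q \<le> real (card I) ^ q * (\<Sum>i\<in>I. f i ^ Suc q)" for q
  proof (induction q)
    case 0
    then show ?case by simp
  next
    case (Suc q)
    have cheb: "(\<Sum>i\<in>I. f i) * (\<Sum>i\<in>I. f i ^ Suc q) \<le> real (card I) * (\<Sum>i\<in>I. f i * f i ^ Suc q)"
    proof (rule sum_mult_sum_le_card_mult_sum[OF assms(1)])
      fix i j assume "i \<in> I" "j \<in> I"
      then have "0 \<le> f i" "0 \<le> f j" using assms(2) by auto
      then have "f i \<le> f j \<longleftrightarrow> f i ^ Suc q \<le> f j ^ Suc q"
        by (meson power_mono power_le_imp_le_base)
      then show "0 \<le> (f i - f j) * (f i ^ Suc q - f j ^ Suc q)"
        by (smt (verit) mult_nonneg_nonneg mult_nonpos_nonpos)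
    qed
    have "0 \<le> (\<Sum>i\<in>I. f i)" using assms(2) by (intro sum_nonneg) auto
    then have "(\<Sum>i\<in>I. f i) * (\<Sum>i\<in>I. f i) ^ Suc q
        \<le> (\<Sum>i\<in>I. f i) * (real (card I) ^ q * (\<Sum>i\<in>I. f i ^ Suc q))"
      using Suc.IH by (intro mult_left_mono)
    also have "\<dots> = real (card I) ^ q * ((\<Sum>i\<in>I. f i) * (\<Sum>i\<in>I. f i ^ Suc q))"
      by (simp add: mult_ac)
    also have "\<dots> \<le> real (card I) ^ q * (real (card I) * (\<Sum>i\<in>I. f i * f i ^ Suc q))"
      using cheb by (intro mult_left_mono) auto
    finally show ?case by (simp add: mult_ac)
  qed
  from this[of "p - 1"] show ?thesis using assms(3) by simp
qed

lemma power_le_card_power_mult_sum_power: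
  fixes f :: "'i \<Rightarrow> real"
  assumes "finite I" and "\<And>i. i \<in> I \<Longrightarrow> 0 \<le> f i" and "p \<ge> 1"
    and "0 \<le> L" and "L \<le> (\<Sum>i\<in>I. f i)"
  shows "L ^ p \<le> real (card I) ^ (p - 1) * (\<Sum>i\<in>I. f i ^ p)"
  by (rule order_trans[OF power_mono[OF assms(5,4)] sum_power_le_card_power_mult_sum_power[OF assms(1-3)]])

definition tuples :: "(nat \<Rightarrow> 'a set) \<Rightarrow> nat \<Rightarrow> 'a list set" where
  "tuples A r = {t. length t = r \<and> (\<forall>i<r. t ! i \<in> A i)}"

text \<open>A grid with rows in \<open>A 0, \<dots>, A (r - 1)\<close> and \<open>m\<close> columns encodes a map of the complete
  \<open>r\<close>-partite \<open>r\<close>-graph with parts of size \<open>m\<close> into the parts \<open>A i\<close>; its edges are the transversals,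
  which pick one entry from each row.\<close>

definition grids :: "nat \<Rightarrow> (nat \<Rightarrow> 'a set) \<Rightarrow> nat \<Rightarrow> 'a list list set" where
  "grids m A r = {X. length X = r \<and> (\<forall>i<r. length (X ! i) = m \<and> set (X ! i) \<subseteq> A i)}"

definition transversal :: "'a list list \<Rightarrow> nat list \<Rightarrow> 'a list" where
  "transversal X a = map (\<lambda>i. X ! i ! (a ! i)) [0..<length X]"

definition complete_in :: "nat \<Rightarrow> 'a list set \<Rightarrow> 'a list list \<Rightarrow> bool" where
  "complete_in m R X \<longleftrightarrow>
     (\<forall>a. length a = length X \<longrightarrow> (\<forall>j\<in>set a. j < m) \<longrightarrow> transversal X a \<in> R)"

definition complete_grids :: "nat \<Rightarrow> (nat \<Rightarrow> 'a set) \<Rightarrow> nat \<Rightarrow> 'a list set \<Rightarrow> 'a list list set" where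
  "complete_grids m A r R = {X \<in> grids m A r. complete_in m R X}"

definition last_fibre :: "'a list set \<Rightarrow> 'a \<Rightarrow> 'a list set" where
  "last_fibre R y = {t. t @ [y] \<in> R}"

definition extensions :: "nat \<Rightarrow> (nat \<Rightarrow> 'a set) \<Rightarrow> nat \<Rightarrow> 'a list set \<Rightarrow> 'a list list \<Rightarrow> 'a set" where
  "extensions m A r R X = {y \<in> A r. complete_in m (last_fibre R y) X}"

lemma inj_snoc: "inj (\<lambda>(t, y). t @ [y])"
  by (auto simp: inj_def)

lemma tuples_0 [simp]: "tuples A 0 = {[]}"
  by (auto simp: tuples_def)

lemma tuples_Suc: "tuples A (Suc r) = (\<lambda>(t, y). t @ [y]) ` (tuples A r \<times> A r)"
proof (intro set_eqI iffI)
  fix x assume x: "x \<in> tuples A (Suc r)"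
  then have len: "length x = Suc r" and entries: "\<forall>i<Suc r. x ! i \<in> A i"
    by (auto simp: tuples_def)
  then obtain t y where ty: "x = t @ [y]" by (metis length_Suc_conv_rev)
  with len have "length t = r" by simp
  moreover have "\<forall>i<r. t ! i \<in> A i" using entries ty \<open>length t = r\<close> by (metis less_SucI nth_append)
  moreover have "y \<in> A r" using entries ty \<open>length t = r\<close> by (metis lessI nth_append_length)
  ultimately have "t \<in> tuples A r" "y \<in> A r" by (auto simp: tuples_def)
  with ty show "x \<in> (\<lambda>(t, y). t @ [y]) ` (tuples A r \<times> A r)" by auto
qed (auto simp: tuples_def nth_append less_Suc_eq)

lemma snoc_in_tuples: "t \<in> tuples A r \<Longrightarrow> y \<in> A r \<Longrightarrow> t @ [y] \<in> tuples A (Suc r)"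
  unfolding tuples_Suc by (rule image_eqI[where x = "(t, y)"]) auto

lemma finite_tuples: "\<forall>i<r. finite (A i) \<Longrightarrow> finite (tuples A r)"
  by (induction r) (auto simp: tuples_Suc)

lemma card_tuples: "\<forall>i<r. finite (A i) \<and> card (A i) = n \<Longrightarrow> card (tuples A r) = n ^ r"
  by (induction r)
    (simp_all add: tuples_Suc card_image inj_on_subset[OF inj_snoc] card_cartesian_product
      finite_tuples)

lemma grids_0 [simp]: "grids m A 0 = {[]}"
  by (auto simp: grids_def)

lemma grids_Suc:
  "grids m A (Suc r) = (\<lambda>(X, ys). X @ [ys]) ` (grids m A r \<times> {ys. set ys \<subseteq> A r \<and> length ys = m})"
proof (intro set_eqI iffI)
  fix x assume x: "x \<in> grids m A (Suc r)"
  then have len: "length x = Suc r" and rows: "\<forall>i<Suc r. length (x ! i) = m \<and> set (x ! i) \<subseteq> A i"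
    by (auto simp: grids_def)
  then obtain X ys where Xys: "x = X @ [ys]" by (metis length_Suc_conv_rev)
  with len have "length X = r" by simp
  moreover have "\<forall>i<r. length (X ! i) = m \<and> set (X ! i) \<subseteq> A i"
    using rows Xys \<open>length X = r\<close> by (metis less_SucI nth_append)
  moreover have "set ys \<subseteq> A r \<and> length ys = m"
    using rows Xys \<open>length X = r\<close> by (metis lessI nth_append_length)
  ultimately have "X \<in> grids m A r" "set ys \<subseteq> A r \<and> length ys = m" by (auto simp: grids_def)
  with Xys show "x \<in> (\<lambda>(X, ys). X @ [ys]) ` (grids m A r \<times> {ys. set ys \<subseteq> A r \<and> length ys = m})"
    by auto
next
  fix x assume "x \<in> (\<lambda>(X, ys). X @ [ys]) ` (grids m A r \<times> {ys. set ys \<subseteq> A r \<and> length ys = m})"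
  then obtain X ys where "x = X @ [ys]" "X \<in> grids m A r" "set ys \<subseteq> A r" "length ys = m"
    by auto
  then show "x \<in> grids m A (Suc r)"
    by (auto simp: grids_def nth_append less_Suc_eq)
qed

lemma finite_grids: "\<forall>i<r. finite (A i) \<Longrightarrow> finite (grids m A r)"
  by (induction r) (auto simp: grids_Suc finite_lists_length_eq)

lemma card_grids: "\<forall>i<r. finite (A i) \<and> card (A i) = n \<Longrightarrow> card (grids m A r) = n ^ (m * r)"
  by (induction r)
    (simp_all add: grids_Suc card_image inj_on_subset[OF inj_snoc] card_cartesian_product
      finite_grids finite_lists_length_eq card_lists_length_eq power_add)

lemma grid_eqI:
  assumes "X \<in> grids m A r" "Y \<in> grids m A r" "\<And>i a. i < r \<Longrightarrow> a < m \<Longrightarrow> X ! i ! a = Y ! i ! a"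
  shows "X = Y"
  using assms by (auto simp: grids_def intro!: nth_equalityI)

lemma transversal_snoc:
  "length a = length X \<Longrightarrow> transversal (X @ [ys]) (a @ [j]) = transversal X a @ [ys ! j]"
  by (auto simp: transversal_def nth_append intro!: nth_equalityI)

lemma complete_in_Nil: "complete_in m R [] \<longleftrightarrow> [] \<in> R"
  by (auto simp: complete_in_def transversal_def)

lemma complete_in_Int: "complete_in m (R \<inter> S) X \<longleftrightarrow> complete_in m R X \<and> complete_in m S X"
  by (auto simp: complete_in_def)

lemma complete_in_snoc:
  assumes "length ys = m"
  shows "complete_in m R (X @ [ys]) \<longleftrightarrow> (\<forall>y\<in>set ys. complete_in m (last_fibre R y) X)"
proof
  assume c: "complete_in m R (X @ [ys])"
  show "\<forall>y\<in>set ys. complete_in m (last_fibre R y) X"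
  proof
    fix y assume "y \<in> set ys"
    then obtain j where "j < m" "ys ! j = y" using assms by (auto simp: in_set_conv_nth)
    with c show "complete_in m (last_fibre R y) X"
      by (auto simp: complete_in_def last_fibre_def transversal_snoc[symmetric]
          dest: spec[of _ "_ @ [j]"])
  qed
next
  assume c: "\<forall>y\<in>set ys. complete_in m (last_fibre R y) X"
  show "complete_in m R (X @ [ys])" unfolding complete_in_def
  proof (intro allI impI)
    fix a' :: "nat list" assume a': "length a' = length (X @ [ys])" "\<forall>j\<in>set a'. j < m"
    then obtain a j where aj: "a' = a @ [j]" by (metis length_Suc_conv_rev length_append_singleton)
    with a' assms have "length a = length X" "\<forall>j\<in>set a. j < m" "ys ! j \<in> set ys" by auto
    with c aj show "transversal (X @ [ys]) a' \<in> R"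
      by (auto simp: complete_in_def last_fibre_def transversal_snoc)
  qed
qed

lemma last_fibre_subset_tuples: "R \<subseteq> tuples A (Suc r) \<Longrightarrow> last_fibre R y \<subseteq> tuples A r"
  by (auto simp: last_fibre_def tuples_def nth_append less_Suc_eq)

lemma card_filter_sum: "finite S \<Longrightarrow> card {x\<in>S. P x} = (\<Sum>x\<in>S. if P x then 1 else 0)"
  by (simp add: sum.inter_filter[symmetric])

lemma card_eq_sum_card_last_fibre:
  assumes "\<forall>i<Suc r. finite (A i)" "R \<subseteq> tuples A (Suc r)"
  shows "card R = (\<Sum>y\<in>A r. card (last_fibre R y))"
proof -
  have fin: "finite (last_fibre R y)" for y
    using assms finite_tuples[of r A] last_fibre_subset_tuples finite_subset by (metis less_SucI)
  have "R = (\<Union>y\<in>A r. (\<lambda>t. t @ [y]) ` last_fibre R y)"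
  proof (intro set_eqI iffI)
    fix x assume "x \<in> R"
    moreover from this obtain t y where "x = t @ [y]" "y \<in> A r"
      using assms(2) unfolding tuples_Suc by auto
    ultimately show "x \<in> (\<Union>y\<in>A r. (\<lambda>t. t @ [y]) ` last_fibre R y)"
      by (auto simp: last_fibre_def)
  qed (auto simp: last_fibre_def)
  then have "card R = card (\<Union>y\<in>A r. (\<lambda>t. t @ [y]) ` last_fibre R y)" by simp
  also have "\<dots> = (\<Sum>y\<in>A r. card ((\<lambda>t. t @ [y]) ` last_fibre R y))"
    using assms(1) fin by (intro card_UN_disjoint) auto
  also have "\<dots> = (\<Sum>y\<in>A r. card (last_fibre R y))"
    by (intro sum.cong refl card_image) (auto simp: inj_on_def)
  finally show ?thesis .
qed

lemma card_eq_sum_card_extending_vertices: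
  assumes "\<forall>i<Suc r. finite (A i)" "R \<subseteq> tuples A (Suc r)"
  shows "card R = (\<Sum>t\<in>tuples A r. card {y\<in>A r. t @ [y] \<in> R})"
proof -
  have fin: "finite (tuples A r)" "finite (A r)" using assms finite_tuples[of r A] by auto
  have "last_fibre R y = {t\<in>tuples A r. t @ [y] \<in> R}" for y
    using last_fibre_subset_tuples[OF assms(2)] by (auto simp: last_fibre_def)
  then have "card R = (\<Sum>y\<in>A r. \<Sum>t\<in>tuples A r. if t @ [y] \<in> R then 1 else 0)"
    using card_eq_sum_card_last_fibre[OF assms] fin by (simp add: card_filter_sum)
  also have "\<dots> = (\<Sum>t\<in>tuples A r. card {y\<in>A r. t @ [y] \<in> R})"
    using fin by (subst sum.swap) (simp add: card_filter_sum)
  finally show ?thesis .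
qed

lemma complete_grids_Suc:
  "complete_grids m A (Suc r) R = (\<lambda>(X, ys). X @ [ys]) `
     (SIGMA X:grids m A r. {ys. set ys \<subseteq> extensions m A r R X \<and> length ys = m})"
proof (intro set_eqI iffI)
  fix x assume "x \<in> complete_grids m A (Suc r) R"
  then obtain X ys where x: "x = X @ [ys]" "X \<in> grids m A r" "set ys \<subseteq> A r" "length ys = m"
    and "complete_in m R (X @ [ys])"
    by (auto simp: complete_grids_def grids_Suc)
  then have "set ys \<subseteq> extensions m A r R X"
    by (auto simp: extensions_def complete_in_snoc)
  with x show "x \<in> (\<lambda>(X, ys). X @ [ys]) `
      (SIGMA X:grids m A r. {ys. set ys \<subseteq> extensions m A r R X \<and> length ys = m})"
    by auto
next
  fix x assume "x \<in> (\<lambda>(X, ys). X @ [ys]) `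
      (SIGMA X:grids m A r. {ys. set ys \<subseteq> extensions m A r R X \<and> length ys = m})"
  then obtain X ys where "x = X @ [ys]" "X \<in> grids m A r"
    "set ys \<subseteq> extensions m A r R X" "length ys = m"
    by auto
  then show "x \<in> complete_grids m A (Suc r) R"
    by (auto simp: complete_grids_def grids_Suc extensions_def complete_in_snoc)
qed

lemma card_complete_grids_Suc:
  assumes "\<forall>i<Suc r. finite (A i)"
  shows "card (complete_grids m A (Suc r) R) = (\<Sum>X\<in>grids m A r. card (extensions m A r R X) ^ m)"
proof -
  have fin: "finite (A r)" "finite (grids m A r)" using assms finite_grids[of r A m] by auto
  have "card (complete_grids m A (Suc r) R) =
      card (SIGMA X:grids m A r. {ys. set ys \<subseteq> extensions m A r R X \<and> length ys = m})"
    unfolding complete_grids_Suc by (intro card_image inj_on_subset[OF inj_snoc]) auto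
  also have "\<dots> = (\<Sum>X\<in>grids m A r. card {ys. set ys \<subseteq> extensions m A r R X \<and> length ys = m})"
    using fin by (intro card_SigmaI) (auto simp: extensions_def intro!: finite_lists_length_eq)
  also have "\<dots> = (\<Sum>X\<in>grids m A r. card (extensions m A r R X) ^ m)"
    using fin by (intro sum.cong refl card_lists_length_eq) (auto simp: extensions_def)
  finally show ?thesis .
qed

lemma sum_card_extensions:
  assumes "\<forall>i<Suc r. finite (A i)"
  shows "(\<Sum>X\<in>grids m A r. card (extensions m A r R X)) =
    (\<Sum>y\<in>A r. card (complete_grids m A r (last_fibre R y)))"
proof -
  have fin: "finite (A r)" "finite (grids m A r)" using assms finite_grids[of r A m] by auto
  then show ?thesis
    unfolding extensions_def complete_grids_def
    by (simp add: card_filter_sum sum.swap[of _ "A r"])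
qed

lemma sum_card_extensions_lower:
  assumes A: "\<forall>i<Suc r. finite (A i) \<and> card (A i) = n" and "n > 0" "m \<ge> 1"
    and R: "R \<subseteq> tuples A (Suc r)"
    and bound: "\<And>R'. R' \<subseteq> tuples A r \<Longrightarrow>
      (real (card R') / real n ^ r) ^ (m ^ r) * real n ^ (m * r) \<le> real (card (complete_grids m A r R'))"
  shows "real n ^ (m * r) * (real n * (real (card R) / real n ^ Suc r) ^ (m ^ r))
    \<le> (\<Sum>X\<in>grids m A r. real (card (extensions m A r R X)))"
proof -
  define p where "p = m ^ r"
  define D where "D = real (card R) / real n ^ Suc r"
  define f where "f y = real (card (last_fibre R y)) / real n ^ r" for y
  have n: "real n > 0" using \<open>n > 0\<close> by simp
  have p: "p \<ge> 1" using \<open>m \<ge> 1\<close> by (simp add: p_def)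
  have fin: "\<forall>i<Suc r. finite (A i)" and cA: "card (A r) = n" using A by auto
  have "(\<Sum>y\<in>A r. f y) = real (card R) / real n ^ r"
    using card_eq_sum_card_last_fibre[OF fin R] by (simp add: f_def sum_divide_distrib)
  also have "\<dots> = real n * D" using n by (simp add: D_def field_simps)
  finally have sum_f: "(\<Sum>y\<in>A r. f y) = real n * D" .
  have "real n ^ (p - 1) * (real n * D ^ p) = (real n * D) ^ p"
    using p by (simp add: power_mult_distrib mult.assoc flip: power_Suc2)
  also have "\<dots> \<le> real n ^ (p - 1) * (\<Sum>y\<in>A r. f y ^ p)"
    using sum_power_le_card_power_mult_sum_power[of "A r" f p] fin p cA sum_f
    by (simp add: f_def)
  finally have "real n * D ^ p \<le> (\<Sum>y\<in>A r. f y ^ p)"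
    using n by simp
  then have "real n ^ (m * r) * (real n * D ^ p) \<le> real n ^ (m * r) * (\<Sum>y\<in>A r. f y ^ p)"
    by (intro mult_left_mono) auto
  also have "\<dots> = (\<Sum>y\<in>A r. f y ^ p * real n ^ (m * r))"
    by (simp add: sum_distrib_left mult_ac)
  also have "\<dots> \<le> (\<Sum>y\<in>A r. real (card (complete_grids m A r (last_fibre R y))))"
    unfolding f_def p_def using last_fibre_subset_tuples[OF R] by (intro sum_mono bound) auto
  also have "\<dots> = (\<Sum>X\<in>grids m A r. real (card (extensions m A r R X)))"
    using sum_card_extensions[OF fin, of m R] by (simp flip: of_nat_sum)
  finally show ?thesis by (simp add: D_def p_def)
qed

lemma sum_card_extensions_power_lower:
  assumes A: "\<forall>i<Suc r. finite (A i) \<and> card (A i) = n" and "n > 0" "m \<ge> 1"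
    and R: "R \<subseteq> tuples A (Suc r)" and D: "0 \<le> D" "D \<le> real (card R) / real n ^ Suc r"
    and bound: "\<And>R'. R' \<subseteq> tuples A r \<Longrightarrow>
      (real (card R') / real n ^ r) ^ (m ^ r) * real n ^ (m * r) \<le> real (card (complete_grids m A r R'))"
  shows "D ^ (m ^ Suc r) * real n ^ (m * Suc r)
    \<le> (\<Sum>X\<in>grids m A r. real (card (extensions m A r R X)) ^ m)"
proof -
  obtain m' where m': "m = Suc m'" using \<open>m \<ge> 1\<close> by (cases m) auto
  define L where "L = real n ^ (m * r) * (real n * D ^ (m ^ r))"
  have "L \<le> real n ^ (m * r) * (real n * (real (card R) / real n ^ Suc r) ^ (m ^ r))"
    unfolding L_def using D by (intro mult_left_mono power_mono) auto
  also have "\<dots> \<le> (\<Sum>X\<in>grids m A r. real (card (extensions m A r R X)))"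
    using assms by (intro sum_card_extensions_lower) auto
  finally have "L ^ m \<le> real (card (grids m A r)) ^ m' * (\<Sum>X\<in>grids m A r. real (card (extensions m A r R X)) ^ m)"
    using power_le_card_power_mult_sum_power[of "grids m A r" _ m L] A finite_grids[of r A m] D
    by (simp add: L_def m')
  also have "\<dots> = real n ^ (m * r * m') * (\<Sum>X\<in>grids m A r. real (card (extensions m A r R X)) ^ m)"
    using A card_grids[of r A n m] by (simp add: power_mult)
  finally have "L ^ m \<le> real n ^ (m * r * m') * (\<Sum>X\<in>grids m A r. real (card (extensions m A r R X)) ^ m)" .
  moreover have "L ^ m = real n ^ (m * r * m') * (D ^ (m ^ Suc r) * real n ^ (m * Suc r))"
  proof -
    have "L ^ m = real n ^ (m * r * m + m) * D ^ (m ^ r * m)"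
      by (simp add: L_def power_mult_distrib power_add power_mult)
    also have "m * r * m + m = m * r * m' + m * Suc r" by (simp add: m' algebra_simps)
    finally show ?thesis by (simp add: power_add mult.commute)
  qed
  ultimately show ?thesis using \<open>n > 0\<close> by simp
qed

lemma card_complete_grids_lower:
  assumes "\<forall>i<r. finite (A i) \<and> card (A i) = n" "n > 0" "m \<ge> 1" "R \<subseteq> tuples A r"
  shows "(real (card R) / real n ^ r) ^ (m ^ r) * real n ^ (m * r) \<le> real (card (complete_grids m A r R))"
  using assms
proof (induction r arbitrary: R)
  case 0
  then have "R = {} \<or> R = {[]}" by auto
  moreover have "complete_grids m A 0 R = (if [] \<in> R then {[]} else {})"
    using 0 by (auto simp: complete_grids_def complete_in_Nil)
  ultimately show ?case by auto
next
  case (Suc r)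
  have "(real (card R) / real n ^ Suc r) ^ (m ^ Suc r) * real n ^ (m * Suc r)
      \<le> (\<Sum>X\<in>grids m A r. real (card (extensions m A r R X)) ^ m)"
    using Suc by (intro sum_card_extensions_power_lower) auto
  also have "\<dots> = real (card (complete_grids m A (Suc r) R))"
    using Suc.prems card_complete_grids_Suc[of r A m R] by simp
  finally show ?case .
qed

lemma card_lower_of_extension_degree:
  assumes "\<forall>i<Suc r. finite (A i) \<and> card (A i) = n" "R \<subseteq> tuples A (Suc r)"
    and "\<forall>t\<in>tuples A r. c \<le> real (card {y\<in>A r. t @ [y] \<in> R})"
  shows "c * real n ^ r \<le> real (card R)"
proof -
  have "c * real n ^ r = (\<Sum>t\<in>tuples A r. c)"
    using assms(1) card_tuples[of r A n] by simp
  also have "\<dots> \<le> (\<Sum>t\<in>tuples A r. real (card {y\<in>A r. t @ [y] \<in> R}))"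
    using assms(3) by (intro sum_mono) auto
  also have "\<dots> = real (card R)"
    using assms(1,2) card_eq_sum_card_extending_vertices[of r A R] by simp
  finally show ?thesis .
qed

lemma card_rooted_complete_grids:
  assumes "\<forall>i<Suc r. finite (A i)"
  shows "card {X\<in>complete_grids m A (Suc r) R. X ! r ! 0 = v} =
    (\<Sum>X\<in>grids m A r. card {ys. set ys \<subseteq> extensions m A r R X \<and> length ys = m \<and> ys ! 0 = v})"
proof -
  have fin: "finite (A r)" "finite (grids m A r)" using assms finite_grids[of r A m] by auto
  have "{X\<in>complete_grids m A (Suc r) R. X ! r ! 0 = v} = (\<lambda>(X, ys). X @ [ys]) `
      (SIGMA X:grids m A r. {ys. set ys \<subseteq> extensions m A r R X \<and> length ys = m \<and> ys ! 0 = v})"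
    unfolding complete_grids_Suc by (force simp: grids_def nth_append)
  also have "card \<dots> =
      card (SIGMA X:grids m A r. {ys. set ys \<subseteq> extensions m A r R X \<and> length ys = m \<and> ys ! 0 = v})"
    by (intro card_image inj_on_subset[OF inj_snoc]) auto
  also have "\<dots> = (\<Sum>X\<in>grids m A r.
      card {ys. set ys \<subseteq> extensions m A r R X \<and> length ys = m \<and> ys ! 0 = v})"
  proof (intro card_SigmaI fin ballI)
    fix X
    have "finite {ys. set ys \<subseteq> extensions m A r R X \<and> length ys = m}"
      using fin by (intro finite_lists_length_eq) (auto simp: extensions_def)
    then show "finite {ys. set ys \<subseteq> extensions m A r R X \<and> length ys = m \<and> ys ! 0 = v}"
      by (rule finite_subset[rotated]) auto
  qed
  finally show ?thesis .
qed

lemma card_lists_with_head: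
  assumes "finite N" "v \<in> N" "m \<ge> 1"
  shows "card {ys. set ys \<subseteq> N \<and> length ys = m \<and> ys ! 0 = v} = card N ^ (m - 1)"
proof -
  have "{ys. set ys \<subseteq> N \<and> length ys = m \<and> ys ! 0 = v} =
      (\<lambda>zs. v # zs) ` {zs. set zs \<subseteq> N \<and> length zs = m - 1}"
  proof (intro set_eqI iffI)
    fix ys assume ys: "ys \<in> {ys. set ys \<subseteq> N \<and> length ys = m \<and> ys ! 0 = v}"
    with \<open>m \<ge> 1\<close> obtain z zs where "ys = z # zs" by (cases ys) auto
    with ys show "ys \<in> (\<lambda>zs. v # zs) ` {zs. set zs \<subseteq> N \<and> length zs = m - 1}" by auto
  qed (use assms in auto)
  then show ?thesis
    using card_lists_length_eq[OF assms(1)] by (simp add: card_image)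
qed

text \<open>The rooted count is reduced to the unrooted one for \<open>last_replaceable R v\<close>: a grid \<open>X\<close> has
  extensions for it only if it is complete in the fibre of \<open>v\<close>, and then they are exactly its
  extensions for \<open>R\<close>, which include \<open>v\<close>.\<close>

definition last_replaceable :: "'a list set \<Rightarrow> 'a \<Rightarrow> 'a list set" where
  "last_replaceable R v = {s \<in> R. butlast s @ [v] \<in> R}"

lemma last_fibre_last_replaceable:
  "last_fibre (last_replaceable R v) y = last_fibre R y \<inter> last_fibre R v"
  by (auto simp: last_replaceable_def last_fibre_def)

lemma card_last_replaceable_lower:
  assumes fin: "\<forall>i<Suc r. finite (A i)" and R: "R \<subseteq> tuples A (Suc r)" and "0 \<le> \<alpha>"
    and codeg: "\<forall>t\<in>tuples A r. \<alpha> * real n \<le> real (card {y\<in>A r. t @ [y] \<in> R})"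
    and fibre_v: "\<alpha> * real n ^ r \<le> real (card (last_fibre R v))"
  shows "\<alpha> ^ 2 * real n ^ Suc r \<le> real (card (last_replaceable R v))"
proof -
  have R': "last_replaceable R v \<subseteq> tuples A (Suc r)" using R by (auto simp: last_replaceable_def)
  have "finite (tuples A r)" using fin by (intro finite_tuples) auto
  then have fin_v: "finite (last_fibre R v)"
    using last_fibre_subset_tuples[OF R] finite_subset by blast
  have "last_fibre R y \<inter> last_fibre R v = {t \<in> last_fibre R v. t \<in> last_fibre R y}" for y
    by blast
  then have "card (last_replaceable R v)
      = (\<Sum>y\<in>A r. \<Sum>t\<in>last_fibre R v. if t \<in> last_fibre R y then 1 else 0)"
    using card_eq_sum_card_last_fibre[OF fin R'] fin_v
    by (simp add: card_filter_sum last_fibre_last_replaceable)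
  also have "\<dots> = (\<Sum>t\<in>last_fibre R v. card {y\<in>A r. t @ [y] \<in> R})"
    using fin by (subst sum.swap) (simp add: card_filter_sum last_fibre_def)
  finally have "real (card (last_replaceable R v))
      = (\<Sum>t\<in>last_fibre R v. real (card {y\<in>A r. t @ [y] \<in> R}))"
    by simp
  also have "\<dots> \<ge> real (card (last_fibre R v)) * (\<alpha> * real n)"
    using codeg last_fibre_subset_tuples[OF R] by (simp add: sum_bounded_below subset_iff)
  finally show ?thesis
    using mult_right_mono[OF fibre_v, of "\<alpha> * real n"] \<open>0 \<le> \<alpha>\<close>
    by (simp add: power2_eq_square mult_ac)
qed

lemma card_extensions_last_replaceable_power_le:
  assumes "finite (A r)" "card (A r) = n" "n > 0" "m \<ge> 1" "v \<in> A r"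
  shows "real (card (extensions m A r (last_replaceable R v) X)) ^ m / real n
    \<le> real (card {ys. set ys \<subseteq> extensions m A r R X \<and> length ys = m \<and> ys ! 0 = v})"
proof (cases "complete_in m (last_fibre R v) X")
  case True
  obtain m' where m': "m = Suc m'" using \<open>m \<ge> 1\<close> by (cases m) auto
  from True have same: "extensions m A r (last_replaceable R v) X = extensions m A r R X"
    by (auto simp: extensions_def last_fibre_last_replaceable complete_in_Int)
  have fin: "finite (extensions m A r R X)" using assms(1) by (simp add: extensions_def)
  have "card (extensions m A r R X) \<le> n"
    using assms(1,2) card_mono[of "A r" "extensions m A r R X"] by (auto simp: extensions_def)
  then have "real (card (extensions m A r R X)) ^ m
      \<le> real (card (extensions m A r R X)) ^ m' * real n"
    unfolding m' power_Suc2 by (intro mult_left_mono) auto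
  moreover have "v \<in> extensions m A r R X" using True assms(5) by (simp add: extensions_def)
  ultimately show ?thesis
    using assms(3) card_lists_with_head[OF fin _ assms(4)] unfolding same by (simp add: m' field_simps)
next
  case False
  then have "extensions m A r (last_replaceable R v) X = {}"
    by (auto simp: extensions_def last_fibre_last_replaceable complete_in_Int)
  then show ?thesis using \<open>m \<ge> 1\<close> by (simp add: power_0_left)
qed

lemma card_rooted_complete_grids_lower:
  assumes A: "\<forall>i<Suc r. finite (A i) \<and> card (A i) = n" and "n > 0" and "m \<ge> 1"
    and R: "R \<subseteq> tuples A (Suc r)" and "v \<in> A r" and "0 \<le> \<alpha>"
    and codeg: "\<forall>t\<in>tuples A r. \<alpha> * real n \<le> real (card {y\<in>A r. t @ [y] \<in> R})"
    and fibre_v: "\<alpha> * real n ^ r \<le> real (card (last_fibre R v))"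
  shows "(\<alpha> ^ 2) ^ (m ^ Suc r) * real n ^ (m * Suc r - 1)
    \<le> real (card {X\<in>complete_grids m A (Suc r) R. X ! r ! 0 = v})"
proof -
  have n: "real n > 0" using \<open>n > 0\<close> by simp
  have "\<alpha> ^ 2 \<le> real (card (last_replaceable R v)) / real n ^ Suc r"
    using card_last_replaceable_lower[of r A R \<alpha> n v] assms n by (simp add: field_simps)
  then have "(\<alpha> ^ 2) ^ (m ^ Suc r) * real n ^ (m * Suc r)
      \<le> (\<Sum>X\<in>grids m A r. real (card (extensions m A r (last_replaceable R v) X)) ^ m)"
    using assms card_complete_grids_lower[of r A n m]
    by (intro sum_card_extensions_power_lower) (auto simp: last_replaceable_def)
  moreover have "real n ^ (m * Suc r) = real n * real n ^ (m * Suc r - 1)"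
    using \<open>m \<ge> 1\<close> by (simp flip: power_Suc)
  ultimately have "(\<alpha> ^ 2) ^ (m ^ Suc r) * real n ^ (m * Suc r - 1)
      \<le> (\<Sum>X\<in>grids m A r. real (card (extensions m A r (last_replaceable R v) X)) ^ m / real n)"
    using n by (simp add: field_simps flip: sum_divide_distrib)
  also have "\<dots> \<le> (\<Sum>X\<in>grids m A r.
      real (card {ys. set ys \<subseteq> extensions m A r R X \<and> length ys = m \<and> ys ! 0 = v}))"
    using assms by (intro sum_mono card_extensions_last_replaceable_power_le) auto
  also have "\<dots> = real (card {X\<in>complete_grids m A (Suc r) R. X ! r ! 0 = v})"
    using card_rooted_complete_grids[of r A m R v] A by (simp flip: of_nat_sum)
  finally show ?thesis .
qed

definition grid_entry :: "'a list list \<Rightarrow> nat \<times> nat \<Rightarrow> 'a" where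
  "grid_entry X = (\<lambda>(i, a). X ! i ! a)"

definition grid_vertices :: "nat \<Rightarrow> nat \<Rightarrow> 'a list list \<Rightarrow> 'a set" where
  "grid_vertices m r X = grid_entry X ` ({..<r} \<times> {..<m})"

lemma grid_entry_in: "X \<in> grids m A r \<Longrightarrow> i < r \<Longrightarrow> a < m \<Longrightarrow> grid_entry X (i, a) \<in> A i"
  unfolding grids_def grid_entry_def by (auto intro: nth_mem[THEN subsetD[rotated]])

lemma grid_eq_iff_grid_entry_eq:
  assumes "X \<in> grids m A r" "Y \<in> grids m A r"
  shows "X = Y \<longleftrightarrow> (\<forall>p\<in>{..<r} \<times> {..<m}. grid_entry X p = grid_entry Y p)"
  using assms grid_eqI[of X m A r Y] by (auto simp: grid_entry_def)

text \<open>Fixing the root entry and a repeated entry in row \<open>i\<close> leaves \<open>r m - 2\<close> free entries.\<close>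

lemma card_rooted_grids_with_repeat_le:
  assumes A: "\<forall>i<r. finite (A i) \<and> card (A i) = n" and "j < r" "i < r" "a < b" "b < m"
  shows "card {X\<in>grids m A r. X ! j ! 0 = v \<and> X ! i ! a = X ! i ! b} \<le> n ^ (r * m - 2)"
proof -
  define G where "G = {X\<in>grids m A r. X ! j ! 0 = v \<and> X ! i ! a = X ! i ! b}"
  define Pos where "Pos = {..<r} \<times> {..<m}"
  define D where "D = Pos - {(j, 0), (i, b)}"
  have "(j, 0) \<noteq> (i, b)" "{(j, 0), (i, b)} \<subseteq> Pos" using assms by (auto simp: Pos_def)
  then have cD: "card D = r * m - 2"
    by (simp add: D_def Pos_def card_Diff_subset card_cartesian_product)
  have "inj_on (\<lambda>X. restrict (grid_entry X) D) G"
  proof (rule inj_onI)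
    fix X Y assume X: "X \<in> G" and Y: "Y \<in> G"
      and "restrict (grid_entry X) D = restrict (grid_entry Y) D"
    then have on_D: "grid_entry X p = grid_entry Y p" if "p \<in> D" for p
      using that by (metis restrict_apply')
    have root: "grid_entry X (j, 0) = grid_entry Y (j, 0)"
      using X Y by (simp add: G_def grid_entry_def)
    have "grid_entry X (i, a) = grid_entry Y (i, a)"
      using on_D[of "(i, a)"] root assms by (cases "(i, a) = (j, 0)") (auto simp: D_def Pos_def)
    then have "grid_entry X (i, b) = grid_entry Y (i, b)"
      using X Y by (simp add: G_def grid_entry_def)
    with on_D root have "\<forall>p\<in>Pos. grid_entry X p = grid_entry Y p"
      by (auto simp: D_def)
    moreover have "X \<in> grids m A r" "Y \<in> grids m A r" using X Y by (auto simp: G_def)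
    ultimately show "X = Y" unfolding Pos_def using grid_eq_iff_grid_entry_eq by blast
  qed
  moreover have "(\<lambda>X. restrict (grid_entry X) D) ` G \<subseteq> PiE D (\<lambda>p. A (fst p))"
    unfolding restrict_PiE_iff image_subset_iff by (auto simp: G_def D_def Pos_def grid_entry_in)
  moreover have "finite (PiE D (\<lambda>p. A (fst p)))"
    using A by (intro finite_PiE) (auto simp: D_def Pos_def)
  ultimately have "card G \<le> card (PiE D (\<lambda>p. A (fst p)))"
    by (rule card_inj_on_le)
  also have "\<dots> = n ^ (r * m - 2)"
    using A cD by (simp add: card_PiE D_def Pos_def mem_Times_iff)
  finally show ?thesis by (simp add: G_def)
qed

lemma card_rooted_degenerate_grids_le:
  assumes A: "\<forall>i<r. finite (A i) \<and> card (A i) = n" and "j < r"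
  shows "card {X\<in>grids m A r. X ! j ! 0 = v \<and> \<not> (\<forall>i<r. distinct (X ! i))} \<le> r * m * m * n ^ (r * m - 2)"
proof -
  define T where "T = {(i, a, b). i < r \<and> a < b \<and> b < m}"
  define B where "B = (\<lambda>(i, a, b). {X\<in>grids m A r. X ! j ! 0 = v \<and> X ! i ! a = X ! i ! b})"
  have T: "T \<subseteq> {..<r} \<times> {..<m} \<times> {..<m}" by (auto simp: T_def)
  then have "finite T" by (rule finite_subset) auto
  have "{X\<in>grids m A r. X ! j ! 0 = v \<and> \<not> (\<forall>i<r. distinct (X ! i))} \<subseteq> (\<Union>\<tau>\<in>T. B \<tau>)"
  proof
    fix X assume X: "X \<in> {X\<in>grids m A r. X ! j ! 0 = v \<and> \<not> (\<forall>i<r. distinct (X ! i))}"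
    then obtain i where i: "i < r" "\<not> distinct (X ! i)" by auto
    with X have "length (X ! i) = m" by (auto simp: grids_def)
    with i obtain a b where "a < b" "b < m" "X ! i ! a = X ! i ! b"
      by (metis distinct_conv_nth linorder_neqE_nat)
    with i X show "X \<in> (\<Union>\<tau>\<in>T. B \<tau>)"
      by (auto simp: T_def B_def intro!: bexI[of _ "(i, a, b)"])
  qed
  then have "card {X\<in>grids m A r. X ! j ! 0 = v \<and> \<not> (\<forall>i<r. distinct (X ! i))} \<le> card (\<Union>\<tau>\<in>T. B \<tau>)"
    using \<open>finite T\<close> finite_grids[of r A m] A
    by (intro card_mono) (auto simp: B_def split: prod.splits)
  also have "\<dots> \<le> (\<Sum>\<tau>\<in>T. card (B \<tau>))"
    using \<open>finite T\<close> by (rule card_UN_le)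
  also have "\<dots> \<le> (\<Sum>\<tau>\<in>T. n ^ (r * m - 2))"
    using card_rooted_grids_with_repeat_le[OF A \<open>j < r\<close>]
    by (intro sum_mono) (auto simp: T_def B_def)
  also have "\<dots> \<le> r * m * m * n ^ (r * m - 2)"
    using card_mono[OF _ T] by (simp add: card_cartesian_product)
  finally show ?thesis .
qed

lemma card_le_card_grid_vertices_mult:
  assumes "finite G" and "G \<subseteq> grids m A r"
  shows "card G \<le> card (grid_vertices m r ` G) * (r * m) ^ (r * m)"
proof -
  define Pos where "Pos = {..<r} \<times> {..<m}"
  have fibre: "card {X\<in>G. grid_vertices m r X = W} \<le> (r * m) ^ (r * m)"
    if W: "W \<in> grid_vertices m r ` G" for W
  proof -
    obtain X0 where "W = grid_entry X0 ` Pos" using W by (auto simp: grid_vertices_def Pos_def)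
    then have "card W \<le> r * m" "finite W"
      using card_image_le[of Pos "grid_entry X0"] by (auto simp: Pos_def card_cartesian_product)
    have "inj_on (\<lambda>X. restrict (grid_entry X) Pos) {X\<in>G. grid_vertices m r X = W}"
    proof (rule inj_onI)
      fix X Y assume "X \<in> {X\<in>G. grid_vertices m r X = W}" "Y \<in> {X\<in>G. grid_vertices m r X = W}"
        and eq: "restrict (grid_entry X) Pos = restrict (grid_entry Y) Pos"
      then have "X \<in> grids m A r" "Y \<in> grids m A r" using assms(2) by auto
      moreover have "grid_entry X p = grid_entry Y p" if "p \<in> Pos" for p
        using eq that by (metis restrict_apply')
      ultimately show "X = Y" unfolding Pos_def by (simp add: grid_eq_iff_grid_entry_eq)
    qed
    moreover have "(\<lambda>X. restrict (grid_entry X) Pos) ` {X\<in>G. grid_vertices m r X = W}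
        \<subseteq> PiE Pos (\<lambda>_. W)"
      unfolding restrict_PiE_iff image_subset_iff by (auto simp: grid_vertices_def Pos_def)
    ultimately have "card {X\<in>G. grid_vertices m r X = W} \<le> card (PiE Pos (\<lambda>_. W))"
      using \<open>finite W\<close> by (intro card_inj_on_le finite_PiE) (auto simp: Pos_def)
    also have "\<dots> = card W ^ (r * m)"
      by (simp add: card_PiE Pos_def card_cartesian_product)
    also have "\<dots> \<le> (r * m) ^ (r * m)"
      using \<open>card W \<le> r * m\<close> by (rule power_mono) simp
    finally show ?thesis .
  qed
  have "card G = card (\<Union>W\<in>grid_vertices m r ` G. {X\<in>G. grid_vertices m r X = W})"
    by (rule arg_cong[where f = card]) blast
  also have "\<dots> \<le> (\<Sum>W\<in>grid_vertices m r ` G. card {X\<in>G. grid_vertices m r X = W})"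
    using assms(1) by (intro card_UN_le) auto
  also have "\<dots> \<le> card (grid_vertices m r ` G) * (r * m) ^ (r * m)"
    using sum_bounded_above[of "grid_vertices m r ` G", OF fibre] by simp
  finally show ?thesis .
qed

lemma card_edge_Int_part:
  assumes kp: "kpartite_kgraph k P E" and "e \<in> E" "i < k"
  shows "card (e \<inter> P i) = 1"
proof -
  have card_e: "card e = k" and "e \<subseteq> vset k P" and le1: "\<forall>j<k. card (e \<inter> P j) \<le> 1"
    and disj: "\<forall>i<k. \<forall>j<k. i \<noteq> j \<longrightarrow> P i \<inter> P j = {}"
    using assms(1,2) by (auto simp: kpartite_kgraph_def)
  then have "k = card (\<Union>j<k. e \<inter> P j)" using card_e by (auto simp: vset_def intro: arg_cong)
  also have "\<dots> = (\<Sum>j<k. card (e \<inter> P j))"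
  proof (rule card_UN_disjoint)
    have "finite e" using card_e \<open>i < k\<close> by (metis card.infinite less_zeroE)
    then show "\<forall>j\<in>{..<k}. finite (e \<inter> P j)" by auto
    show "\<forall>j\<in>{..<k}. \<forall>j'\<in>{..<k}. j \<noteq> j' \<longrightarrow> e \<inter> P j \<inter> (e \<inter> P j') = {}"
      using disj by auto
  qed simp
  also have "\<dots> = card (e \<inter> P i) + (\<Sum>j\<in>{..<k} - {i}. card (e \<inter> P j))"
    using \<open>i < k\<close> by (simp add: sum.remove)
  also have "\<dots> \<le> card (e \<inter> P i) + (k - 1)"
    using le1 \<open>i < k\<close> sum_bounded_above[of "{..<k} - {i}" "\<lambda>j. card (e \<inter> P j)" 1] by simp
  finally show ?thesis using le1 \<open>i < k\<close> by fastforce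
qed

lemma min_codeg_le_card_neighbours:
  assumes kp: "kpartite_kgraph k P E" and "k \<ge> 1"
    and S: "S \<subseteq> vset k P" "card S = k - 1" "legal k P S" and "i < k" "S \<inter> P i = {}"
  shows "min_codeg k P E \<le> card {y\<in>P i. insert y S \<in> E}"
proof -
  have "finite (vset k P)" using kp by (auto simp: kpartite_kgraph_def vset_def)
  then have "min_codeg k P E \<le> deg k E S"
    unfolding min_codeg_def using S by (intro Min_le) (auto intro: finite_subset[of _ "Pow (vset k P)"])
  also have "{S'. card S' = k - card S \<and> S \<union> S' \<in> E} = (\<lambda>y. {y}) ` {y\<in>P i. insert y S \<in> E}"
  proof (intro set_eqI iffI)
    fix S' assume "S' \<in> {S'. card S' = k - card S \<and> S \<union> S' \<in> E}"
    then obtain y where y: "S' = {y}" and e: "S \<union> S' \<in> E"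
      using S \<open>k \<ge> 1\<close> by (auto simp: card_1_singleton_iff)
    have "(S \<union> S') \<inter> P i \<noteq> {}" using card_edge_Int_part[OF kp e \<open>i < k\<close>] by auto
    with y \<open>S \<inter> P i = {}\<close> have "y \<in> P i" by auto
    with y e show "S' \<in> (\<lambda>y. {y}) ` {y\<in>P i. insert y S \<in> E}" by auto
  qed (use S \<open>k \<ge> 1\<close> in auto)
  then have "deg k E S = card {y\<in>P i. insert y S \<in> E}"
    by (simp add: deg_def card_image)
  finally show ?thesis .
qed

lemma set_partite_list:
  assumes kp: "kpartite_kgraph k P E" and "length t = L"
    and t: "\<forall>i<L. t ! i \<in> P (\<sigma> i)" and inj: "inj_on \<sigma> {..<L}" and \<sigma>: "\<forall>i<L. \<sigma> i < k"
  shows "card (set t) = L" "legal k P (set t)" "set t \<subseteq> vset k P"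
    and "q < k \<Longrightarrow> q \<notin> \<sigma> ` {..<L} \<Longrightarrow> set t \<inter> P q = {}"
proof -
  have disj: "\<forall>i<k. \<forall>j<k. i \<noteq> j \<longrightarrow> P i \<inter> P j = {}" using kp by (auto simp: kpartite_kgraph_def)
  have part: "\<sigma> a = q" if "a < L" "t ! a \<in> P q" "q < k" for a q
    using disj t \<sigma> that by blast
  have "distinct t"
    using part t \<sigma> inj \<open>length t = L\<close> by (auto simp: distinct_conv_nth inj_on_def)
  then show "card (set t) = L" using \<open>length t = L\<close> by (simp add: distinct_card)
  show "legal k P (set t)" unfolding legal_def
  proof (intro allI impI)
    fix q assume "q < k"
    then have "\<forall>x\<in>set t \<inter> P q. \<forall>y\<in>set t \<inter> P q. x = y"
      using part inj \<open>length t = L\<close> by (auto simp: in_set_conv_nth inj_on_def) (metis lessThan_iff)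
    then show "card (set t \<inter> P q) \<le> 1" by (simp add: card_le_Suc0_iff_eq)
  qed
  show "set t \<subseteq> vset k P" using t \<sigma> \<open>length t = L\<close> by (force simp: vset_def in_set_conv_nth)
  show "set t \<inter> P q = {}" if "q < k" "q \<notin> \<sigma> ` {..<L}"
    using part that \<open>length t = L\<close> by (force simp: in_set_conv_nth)
qed

lemma hg_iso_image:
  assumes "inj_on \<psi> V" and "\<forall>e\<in>EF. e \<subseteq> V"
  shows "hg_iso (\<psi> ` V) ((`) \<psi> ` EF) V EF"
proof -
  define f where "f = inv_into V \<psi>"
  have "bij_betw f (\<psi> ` V) V"
    unfolding f_def by (rule bij_betw_inv_into[OF inj_on_imp_bij_betw[OF assms(1)]])
  moreover have cancel: "f ` \<psi> ` e = e" if "e \<in> EF" for e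
    unfolding f_def using assms that by (simp add: inv_into_image_cancel)
  then have "bij_betw ((`) f) ((`) \<psi> ` EF) EF"
    by (intro bij_betw_imageI inj_onI) (auto simp: image_image cong: image_cong)
  ultimately show ?thesis unfolding hg_iso_def by blast
qed

lemma partite_enumeration:
  assumes kp: "kpartite_kgraph k P E" and card: "\<forall>i<k. card (P i) = m"
  obtains \<gamma> where "bij_betw \<gamma> ({..<k} \<times> {..<m}) (vset k P)" "\<And>i a. i < k \<Longrightarrow> a < m \<Longrightarrow> \<gamma> (i, a) \<in> P i"
proof -
  have fin: "\<forall>i<k. finite (P i)" and disj: "\<forall>i<k. \<forall>j<k. i \<noteq> j \<longrightarrow> P i \<inter> P j = {}"
    using kp by (auto simp: kpartite_kgraph_def)
  have "\<exists>g. bij_betw g {..<m} (P i)" if "i < k" for i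
    using ex_bij_betw_nat_finite[of "P i"] fin card that by (auto simp: atLeast0LessThan)
  then obtain g where g: "\<And>i. i < k \<Longrightarrow> bij_betw (g i) {..<m} (P i)" by metis
  define \<gamma> where "\<gamma> = (\<lambda>(i, a). g i a)"
  have in_part: "\<gamma> (i, a) \<in> P i" if "i < k" "a < m" for i a
    using g[OF that(1)] that(2) by (auto simp: \<gamma>_def bij_betw_def)
  have onto: "\<gamma> ` ({..<k} \<times> {..<m}) = vset k P"
  proof
    show "vset k P \<subseteq> \<gamma> ` ({..<k} \<times> {..<m})"
    proof
      fix u assume "u \<in> vset k P"
      then obtain i where "i < k" "u \<in> P i" by (auto simp: vset_def)
      then obtain a where "a < m" "u = g i a" using g by (auto simp: bij_betw_def)
      with \<open>i < k\<close> show "u \<in> \<gamma> ` ({..<k} \<times> {..<m})" by (force simp: \<gamma>_def)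
    qed
  qed (auto simp: vset_def intro: in_part)
  have "card (vset k P) = (\<Sum>i<k. card (P i))"
    unfolding vset_def using fin disj by (intro card_UN_disjoint) auto
  also have "\<dots> = card ({..<k} \<times> {..<m})" using card by (simp add: card_cartesian_product)
  finally have "inj_on \<gamma> ({..<k} \<times> {..<m})"
    using onto by (intro eq_card_imp_inj_on) auto
  with onto in_part that show thesis by (simp add: bij_betw_def)
qed

lemma inj_on_grid_entry:
  assumes "X \<in> grids m A r" "\<forall>i<r. distinct (X ! i)" "\<forall>i<r. \<forall>j<r. i \<noteq> j \<longrightarrow> A i \<inter> A j = {}"
  shows "inj_on (grid_entry X) ({..<r} \<times> {..<m})"
proof (rule inj_onI, clarify)
  fix i a j b assume ij: "i < r" "a < m" "j < r" "b < m" and eq: "grid_entry X (i, a) = grid_entry X (j, b)"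
  then have "i = j" using assms(1,3) grid_entry_in[OF assms(1)] by (metis disjoint_iff)
  with eq ij assms(1,2) show "i = j \<and> a = b"
    by (simp add: grid_entry_def grids_def nth_eq_iff_index_eq)
qed

text \<open>An enumeration \<open>\<gamma>\<close> of the parts of \<open>F\<close> by grid positions transports every edge of \<open>F\<close>
  to a transversal of the grid.\<close>

lemma transported_edge_is_edge:
  fixes PF :: "nat \<Rightarrow> 'b set"
  assumes kpF: "kpartite_kgraph k PF EF"
    and \<gamma>: "bij_betw \<gamma> ({..<k} \<times> {..<m}) (vset k PF)" "\<And>i a. i < k \<Longrightarrow> a < m \<Longrightarrow> \<gamma> (i, a) \<in> PF i"
    and X: "X \<in> grids m A k" "complete_in m R X" and R: "\<forall>t\<in>R. set t \<in> E" and "e \<in> EF"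
  shows "(grid_entry X \<circ> inv_into ({..<k} \<times> {..<m}) \<gamma>) ` e \<in> E"
proof -
  define Pos where "Pos = {..<k} \<times> {..<m}"
  define \<psi> where "\<psi> = grid_entry X \<circ> inv_into Pos \<gamma>"
  have "\<exists>u. e \<inter> PF i = {u}" if "i < k" for i
    using card_edge_Int_part[OF kpF \<open>e \<in> EF\<close> that] by (simp add: card_1_singleton_iff)
  then obtain u where u: "\<And>i. i < k \<Longrightarrow> e \<inter> PF i = {u i}" by metis
  define a where "a i = snd (inv_into Pos \<gamma> (u i))" for i
  have a: "a i < m \<and> \<psi> (u i) = X ! i ! a i" if "i < k" for i
  proof -
    obtain j b where jb: "inv_into Pos \<gamma> (u i) = (j, b)" by fastforce
    have "u i \<in> vset k PF" using u[OF that] \<open>i < k\<close> by (auto simp: vset_def)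
    then have "(j, b) \<in> Pos" "\<gamma> (j, b) = u i"
      using jb bij_betw_inv_into[OF \<gamma>(1)] \<gamma>(1) unfolding Pos_def
      by (metis bij_betwE, metis bij_betw_def f_inv_into_f)
    then have "u i \<in> PF j \<inter> PF i" "j < k"
      using \<gamma>(2)[of j b] u[OF that] by (auto simp: Pos_def)
    then have "j = i" using kpF \<open>i < k\<close> by (auto simp: kpartite_kgraph_def)
    with jb \<open>(j, b) \<in> Pos\<close> show ?thesis by (simp add: \<psi>_def a_def grid_entry_def Pos_def)
  qed
  have "e \<subseteq> vset k PF" using kpF \<open>e \<in> EF\<close> by (auto simp: kpartite_kgraph_def)
  with u have "e = u ` {..<k}" by (auto simp: vset_def) blast
  with a have "\<psi> ` e = set (transversal X (map a [0..<k]))"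
    using X(1) by (auto simp: transversal_def grids_def image_iff)
  with a have "\<psi> ` e \<in> E"
    using X(1,2) R by (auto simp: complete_in_def grids_def)
  then show ?thesis by (simp add: \<psi>_def Pos_def)
qed

lemma copy_in_complete_grid:
  fixes PF :: "nat \<Rightarrow> 'b set"
  assumes kpF: "kpartite_kgraph k PF EF" and card_PF: "\<forall>i<k. card (PF i) = m"
    and disj: "\<forall>i<k. \<forall>j<k. i \<noteq> j \<longrightarrow> A i \<inter> A j = {}" and A: "\<forall>i<k. A i \<subseteq> vset k P"
    and X: "X \<in> grids m A k" "complete_in m R X" "\<forall>i<k. distinct (X ! i)"
    and R: "\<forall>t\<in>R. set t \<in> E"
  shows "\<exists>E'. (grid_vertices m k X, E') \<in> copies (vset k P) E (vset k PF) EF"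
proof -
  define Pos where "Pos = {..<k} \<times> {..<m}"
  obtain \<gamma> where \<gamma>: "bij_betw \<gamma> Pos (vset k PF)" "\<And>i a. i < k \<Longrightarrow> a < m \<Longrightarrow> \<gamma> (i, a) \<in> PF i"
    using partite_enumeration[OF kpF card_PF] unfolding Pos_def by blast
  define \<psi> where "\<psi> = grid_entry X \<circ> inv_into Pos \<gamma>"
  have EF: "\<forall>e\<in>EF. e \<subseteq> vset k PF" using kpF by (auto simp: kpartite_kgraph_def)
  have inv: "bij_betw (inv_into Pos \<gamma>) (vset k PF) Pos"
    using \<gamma>(1) by (rule bij_betw_inv_into)
  then have "inj_on \<psi> (vset k PF)"
    using inj_on_grid_entry[OF X(1,3) disj] by (simp add: \<psi>_def Pos_def bij_betw_def comp_inj_on)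
  moreover have "\<psi> ` vset k PF = grid_entry X ` inv_into Pos \<gamma> ` vset k PF"
    by (simp add: \<psi>_def image_comp)
  then have W: "\<psi> ` vset k PF = grid_vertices m k X"
    using inv by (simp add: bij_betw_def grid_vertices_def Pos_def)
  ultimately have "hg_iso (grid_vertices m k X) ((`) \<psi> ` EF) (vset k PF) EF"
    using hg_iso_image[OF _ EF] by metis
  moreover have "(`) \<psi> ` EF \<subseteq> E"
    using transported_edge_is_edge[OF kpF \<gamma>[unfolded Pos_def] X(1,2) R] by (auto simp: \<psi>_def Pos_def)
  moreover have "\<forall>e\<in>(`) \<psi> ` EF. e \<subseteq> grid_vertices m k X" using W EF by blast
  moreover have "grid_vertices m k X \<subseteq> vset k P"
  proof (clarsimp simp: grid_vertices_def)
    fix i a assume "i < k" "a < m"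
    then show "grid_entry X (i, a) \<in> vset k P" using grid_entry_in[OF X(1)] A by blast
  qed
  ultimately show ?thesis unfolding copies_def by blast
qed

lemma min_codeg_le_card_extending_vertices:
  assumes kp: "kpartite_kgraph k P E" and k: "k = Suc r"
    and t: "length t = r" "\<forall>i<r. t ! i \<in> P (\<sigma> i)" and \<sigma>: "inj_on \<sigma> {..<k}" "\<forall>i<k. \<sigma> i < k"
  shows "min_codeg k P E \<le> card {y\<in>P (\<sigma> r). insert y (set t) \<in> E}"
proof -
  have "inj_on \<sigma> {..<r}" using \<sigma>(1) k by (auto intro: inj_on_subset)
  moreover have "\<sigma> r \<notin> \<sigma> ` {..<r}" using \<sigma>(1) k by (subst inj_on_image_mem_iff[OF \<sigma>(1)]) auto
  ultimately show ?thesis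
    using set_partite_list[OF kp t] \<sigma>(2) k
    by (intro min_codeg_le_card_neighbours[OF kp]) auto
qed

lemma finite_copies:
  assumes "kpartite_kgraph k P E"
  shows "finite (copies (vset k P) E V' E')"
proof (rule finite_subset)
  show "copies (vset k P) E V' E' \<subseteq> Pow (vset k P) \<times> Pow E" by (auto simp: copies_def)
  have "finite (vset k P)" using assms by (auto simp: kpartite_kgraph_def vset_def)
  moreover have "E \<subseteq> Pow (vset k P)" using assms by (auto simp: kpartite_kgraph_def)
  ultimately show "finite (Pow (vset k P) \<times> Pow E)" by (auto intro: finite_subset)
qed

text \<open>Each copy of \<open>F\<close> through \<open>v\<close> arises from at most \<open>(k m) ^ (k m)\<close> rooted complete grids, and the
  grids with a repeated entry are negligible.\<close>

lemma card_rooted_complete_grids_le_card_copies: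
  fixes PF :: "nat \<Rightarrow> 'b set"
  assumes kpF: "kpartite_kgraph k PF EF" and card_PF: "\<forall>i<k. card (PF i) = m"
    and kp: "kpartite_kgraph k P E"
    and A: "\<forall>i<k. finite (A i) \<and> card (A i) = n" "\<forall>i<k. A i \<subseteq> vset k P"
      "\<forall>i<k. \<forall>j<k. i \<noteq> j \<longrightarrow> A i \<inter> A j = {}"
    and R: "\<forall>t\<in>R. set t \<in> E" and "j < k" "m \<ge> 1"
  shows "real (card {X\<in>complete_grids m A k R. X ! j ! 0 = v}) - real (k * m * m) * real n ^ (k * m - 2)
    \<le> real (card {c \<in> copies (vset k P) E (vset k PF) EF. v \<in> fst c}) * real ((k * m) ^ (k * m))"
proof -
  define Q where "Q = {X\<in>complete_grids m A k R. X ! j ! 0 = v}"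
  define G where "G = {X\<in>Q. \<forall>i<k. distinct (X ! i)}"
  define C where "C = {c \<in> copies (vset k P) E (vset k PF) EF. v \<in> fst c}"
  have fin_grids: "finite (grids m A k)" using A by (intro finite_grids) auto
  have G: "G \<subseteq> grids m A k" "finite G"
    using fin_grids by (auto simp: G_def Q_def complete_grids_def intro: finite_subset)
  have "Q \<subseteq> G \<union> {X\<in>grids m A k. X ! j ! 0 = v \<and> \<not> (\<forall>i<k. distinct (X ! i))}"
    by (auto simp: G_def Q_def complete_grids_def)
  then have "card Q \<le> card (G \<union> {X\<in>grids m A k. X ! j ! 0 = v \<and> \<not> (\<forall>i<k. distinct (X ! i))})"
    using fin_grids G by (intro card_mono) auto
  also have "\<dots> \<le> card G + card {X\<in>grids m A k. X ! j ! 0 = v \<and> \<not> (\<forall>i<k. distinct (X ! i))}"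
    by (rule card_Un_le)
  also have "\<dots> \<le> card G + k * m * m * n ^ (k * m - 2)"
    using card_rooted_degenerate_grids_le[OF A(1) \<open>j < k\<close>] by simp
  finally have Q_G: "real (card Q) - real (k * m * m) * real n ^ (k * m - 2) \<le> real (card G)"
    by (simp flip: of_nat_add of_nat_mult of_nat_power)
  have "grid_vertices m k ` G \<subseteq> fst ` C"
  proof
    fix W assume "W \<in> grid_vertices m k ` G"
    then obtain X where X: "X \<in> G" "W = grid_vertices m k X" by auto
    then have "X \<in> grids m A k" "complete_in m R X" "\<forall>i<k. distinct (X ! i)" "X ! j ! 0 = v"
      by (auto simp: G_def Q_def complete_grids_def)
    then obtain E' where "(W, E') \<in> copies (vset k P) E (vset k PF) EF" "v \<in> W"
      using copy_in_complete_grid[OF kpF card_PF A(3,2) _ _ _ R] X(2) \<open>j < k\<close> \<open>m \<ge> 1\<close>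
      by (fastforce simp: grid_vertices_def grid_entry_def)
    then show "W \<in> fst ` C" by (force simp: C_def)
  qed
  moreover have "finite C" unfolding C_def using finite_copies[OF kp] by (rule finite_subset[rotated]) auto
  ultimately have "card (grid_vertices m k ` G) \<le> card (fst ` C)"
    by (intro card_mono) auto
  also have "\<dots> \<le> card C" using \<open>finite C\<close> by (rule card_image_le)
  finally have "card G \<le> card C * (k * m) ^ (k * m)"
    using card_le_card_grid_vertices_mult[OF G(2,1)] by (meson le_trans mult_le_mono1)
  then have "real (card G) \<le> real (card C) * real ((k * m) ^ (k * m))"
    by (simp only: of_nat_le_iff flip: of_nat_mult)
  with Q_G show ?thesis by (simp add: Q_def C_def)
qed

definition edge_tuples :: "(nat \<Rightarrow> 'a set) \<Rightarrow> nat \<Rightarrow> 'a set set \<Rightarrow> 'a list set" where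
  "edge_tuples A k E = {t \<in> tuples A k. set t \<in> E}"

lemma min_codeg_le_extension_degree:
  assumes kp: "kpartite_kgraph k P E" and k: "k = Suc r"
    and \<pi>: "inj_on \<pi> {..<k}" "\<forall>i<k. \<pi> i < k" and t: "t \<in> tuples (P \<circ> \<pi>) r"
  shows "min_codeg k P E \<le> card {y\<in>(P \<circ> \<pi>) r. t @ [y] \<in> edge_tuples (P \<circ> \<pi>) k E}"
proof -
  have "{y\<in>(P \<circ> \<pi>) r. t @ [y] \<in> edge_tuples (P \<circ> \<pi>) k E} = {y\<in>P (\<pi> r). insert y (set t) \<in> E}"
    using snoc_in_tuples[OF t] k by (auto simp: edge_tuples_def)
  moreover have "min_codeg k P E \<le> card {y\<in>P (\<pi> r). insert y (set t) \<in> E}"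
    using t \<pi> by (intro min_codeg_le_card_extending_vertices[OF kp k]) (auto simp: tuples_def)
  ultimately show ?thesis by simp
qed

text \<open>Here the vertex \<open>v\<close> of the last part is fixed and the second to last part is the one to
  extend, so the parts are permuted once more before the codegree condition applies.\<close>

lemma min_codeg_le_extension_degree_last_fibre:
  assumes kp: "kpartite_kgraph k P E" and k: "k = Suc (Suc r)"
    and \<pi>: "inj_on \<pi> {..<k}" "\<forall>i<k. \<pi> i < k" and v: "v \<in> P (\<pi> (Suc r))"
    and t: "t \<in> tuples (P \<circ> \<pi>) r"
  shows "min_codeg k P E \<le> card {z\<in>(P \<circ> \<pi>) r. t @ [z] \<in> last_fibre (edge_tuples (P \<circ> \<pi>) k E) v}"
proof -
  define \<sigma> where "\<sigma> = \<pi> \<circ> Transposition.transpose r (Suc r)"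
  have "Transposition.transpose r (Suc r) ` {..<k} = {..<k}" using k by simp
  then have \<sigma>: "inj_on \<sigma> {..<k}" "\<forall>i<k. \<sigma> i < k"
    using \<pi> by (auto simp: \<sigma>_def intro: comp_inj_on)
  have "t @ [z, v] \<in> tuples (P \<circ> \<pi>) k" if "z \<in> P (\<pi> r)" for z
    using snoc_in_tuples[OF snoc_in_tuples[OF t], of z v] that v k by simp
  then have "{z\<in>(P \<circ> \<pi>) r. t @ [z] \<in> last_fibre (edge_tuples (P \<circ> \<pi>) k E) v}
      = {z\<in>P (\<sigma> (Suc r)). insert z (set (t @ [v])) \<in> E}"
    by (auto simp: last_fibre_def edge_tuples_def \<sigma>_def insert_commute)
  moreover have "(t @ [v]) ! i \<in> P (\<sigma> i)" if "i < Suc r" for i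
  proof (cases "i = r")
    case True
    then show ?thesis using t v by (simp add: tuples_def \<sigma>_def nth_append)
  next
    case False
    then have "i < r" using \<open>i < Suc r\<close> by simp
    then show ?thesis using t by (simp add: tuples_def \<sigma>_def nth_append)
  qed
  then have "min_codeg k P E \<le> card {z\<in>P (\<sigma> (Suc r)). insert z (set (t @ [v])) \<in> E}"
    using t \<sigma> by (intro min_codeg_le_card_extending_vertices[OF kp k]) (auto simp: tuples_def)
  ultimately show ?thesis by simp
qed

lemma permuted_parts:
  assumes kp: "kpartite_kgraph k P E" and "\<forall>i<k. card (P i) = n"
    and \<pi>: "inj_on \<pi> {..<k}" "\<forall>i<k. \<pi> i < k"
  shows "\<forall>i<k. finite ((P \<circ> \<pi>) i) \<and> card ((P \<circ> \<pi>) i) = n" "\<forall>i<k. (P \<circ> \<pi>) i \<subseteq> vset k P"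
    and "\<forall>i<k. \<forall>j<k. i \<noteq> j \<longrightarrow> (P \<circ> \<pi>) i \<inter> (P \<circ> \<pi>) j = {}"
proof -
  show "\<forall>i<k. finite ((P \<circ> \<pi>) i) \<and> card ((P \<circ> \<pi>) i) = n" "\<forall>i<k. (P \<circ> \<pi>) i \<subseteq> vset k P"
    using assms by (auto simp: kpartite_kgraph_def vset_def)
  show "\<forall>i<k. \<forall>j<k. i \<noteq> j \<longrightarrow> (P \<circ> \<pi>) i \<inter> (P \<circ> \<pi>) j = {}"
  proof (intro allI impI)
    fix i j assume "i < k" "j < k" "i \<noteq> j"
    then have "\<pi> i \<noteq> \<pi> j" "\<pi> i < k" "\<pi> j < k" using \<pi> by (auto simp: inj_on_eq_iff)
    then show "(P \<circ> \<pi>) i \<inter> (P \<circ> \<pi>) j = {}" using kp by (simp add: kpartite_kgraph_def)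
  qed
qed

lemma copies_through_vertex_lower:
  fixes PF :: "nat \<Rightarrow> 'b set" and P :: "nat \<Rightarrow> 'a set"
  assumes "k \<ge> 2" and "m \<ge> 1" and "0 \<le> \<alpha>"
    and kpF: "kpartite_kgraph k PF EF" and card_PF: "\<forall>i<k. card (PF i) = m"
    and kp: "kpartite_kgraph k P E" and card_P: "\<forall>i<k. card (P i) = n" and "n > 0"
    and codeg: "\<alpha> * real n \<le> real (min_codeg k P E)" and v: "v \<in> vset k P"
  shows "(\<alpha> ^ 2) ^ (m ^ k) * real n ^ (k * m - 1) - real (k * m * m) * real n ^ (k * m - 2)
    \<le> real (card {c \<in> copies (vset k P) E (vset k PF) EF. v \<in> fst c}) * real ((k * m) ^ (k * m))"
proof -
  obtain r where k: "k = Suc (Suc r)" using le_Suc_ex[OF \<open>k \<ge> 2\<close>] by auto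
  obtain j where "j < k" "v \<in> P j" using v by (auto simp: vset_def)
  define \<pi> where "\<pi> = Transposition.transpose j (Suc r)"
  have "\<pi> ` {..<k} = {..<k}" using \<open>j < k\<close> k by (simp add: \<pi>_def)
  then have \<pi>: "inj_on \<pi> {..<k}" "\<forall>i<k. \<pi> i < k" by (auto simp: \<pi>_def)
  have "v \<in> P (\<pi> (Suc r))" using \<open>v \<in> P j\<close> by (simp add: \<pi>_def)
  define A where "A = P \<circ> \<pi>"
  have A: "\<forall>i<k. finite (A i) \<and> card (A i) = n" "\<forall>i<k. A i \<subseteq> vset k P"
      "\<forall>i<k. \<forall>j<k. i \<noteq> j \<longrightarrow> A i \<inter> A j = {}"
    unfolding A_def using permuted_parts[OF kp card_P \<pi>] by blast+
  define R where "R = edge_tuples A k E"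
  have R: "R \<subseteq> tuples A (Suc (Suc r))" using k by (auto simp: R_def edge_tuples_def)
  have "\<forall>t\<in>tuples A (Suc r). \<alpha> * real n \<le> real (card {y\<in>A (Suc r). t @ [y] \<in> R})"
  proof
    fix t assume "t \<in> tuples A (Suc r)"
    then have "min_codeg k P E \<le> card {y\<in>A (Suc r). t @ [y] \<in> R}"
      unfolding A_def R_def by (rule min_codeg_le_extension_degree[OF kp k \<pi>])
    then show "\<alpha> * real n \<le> real (card {y\<in>A (Suc r). t @ [y] \<in> R})" using codeg by linarith
  qed
  moreover have "\<alpha> * real n * real n ^ r \<le> real (card (last_fibre R v))"
  proof (rule card_lower_of_extension_degree[of r A n])
    show "\<forall>t\<in>tuples A r. \<alpha> * real n \<le> real (card {z\<in>A r. t @ [z] \<in> last_fibre R v})"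
    proof
      fix t assume "t \<in> tuples A r"
      then have "min_codeg k P E \<le> card {z\<in>A r. t @ [z] \<in> last_fibre R v}"
        unfolding A_def R_def
        by (rule min_codeg_le_extension_degree_last_fibre[OF kp k \<pi> \<open>v \<in> P (\<pi> (Suc r))\<close>])
      then show "\<alpha> * real n \<le> real (card {z\<in>A r. t @ [z] \<in> last_fibre R v})"
        using codeg by linarith
    qed
  qed (use A(1) k last_fibre_subset_tuples[OF R] in auto)
  ultimately have "(\<alpha> ^ 2) ^ (m ^ k) * real n ^ (k * m - 1)
      \<le> real (card {X\<in>complete_grids m A k R. X ! Suc r ! 0 = v})"
    using card_rooted_complete_grids_lower[of "Suc r" A n m R v \<alpha>] A(1) k \<open>n > 0\<close> \<open>m \<ge> 1\<close> R
      \<open>v \<in> P (\<pi> (Suc r))\<close> \<open>0 \<le> \<alpha>\<close>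
    by (simp add: A_def mult.commute mult.left_commute)
  moreover have "real (card {X\<in>complete_grids m A k R. X ! Suc r ! 0 = v})
      - real (k * m * m) * real n ^ (k * m - 2)
      \<le> real (card {c \<in> copies (vset k P) E (vset k PF) EF. v \<in> fst c}) * real ((k * m) ^ (k * m))"
    using A k \<open>m \<ge> 1\<close> by (intro card_rooted_complete_grids_le_card_copies[OF kpF card_PF kp])
      (auto simp: R_def edge_tuples_def)
  ultimately show ?thesis by simp
qed

lemma lower_order_term_absorbed:
  fixes \<beta> K :: real
  assumes "\<beta> > 0" and "2 * K / \<beta> \<le> real n"
  shows "\<beta> / 2 * real n ^ Suc N \<le> \<beta> * real n ^ Suc N - K * real n ^ N"
proof -
  have "K \<le> \<beta> * real n / 2" using assms by (simp add: field_simps)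
  then have "K * real n ^ N \<le> \<beta> * real n / 2 * real n ^ N" by (intro mult_right_mono) auto
  then show ?thesis by simp
qed

theorem lemma3p3:
  fixes k m :: nat and \<alpha> :: real
    and PF :: "nat \<Rightarrow> 'b set" and EF :: "'b set set"
  assumes "k \<ge> 3" and "m \<ge> 1" and "0 < \<alpha>" and "\<alpha> < 1"
    and "kpartite_kgraph k PF EF"
    and "\<forall>i<k. card (PF i) = m"
  shows "\<exists>\<eta>::real. \<eta> > 0 \<and> (\<exists>n0::nat. \<forall>n\<ge>n0. \<forall>(P :: nat \<Rightarrow> nat set) (E :: nat set set).
           kpartite_kgraph k P E \<longrightarrow> (\<forall>i<k. card (P i) = n) \<longrightarrow>
           real (min_codeg k P E) \<ge> \<alpha> * real n \<longrightarrow>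
           (\<forall>v\<in>vset k P.
              real (card {c \<in> copies (vset k P) E (vset k PF) EF. v \<in> fst c})
                \<ge> \<eta> * real n ^ (k * m - 1)))"
proof -
  define \<beta> where "\<beta> = (\<alpha> ^ 2) ^ (m ^ k)"
  define K where "K = real (k * m * m)"
  define M where "M = real ((k * m) ^ (k * m))"
  have "\<beta> > 0" "M > 0" using assms(1-3) by (auto simp: \<beta>_def M_def)
  have exponent: "k * m - 1 = Suc (k * m - 2)"
    using mult_le_mono[OF assms(1,2)] by linarith
  show ?thesis
  proof (intro exI[of _ "\<beta> / (2 * M)"] conjI exI[of _ "nat \<lceil>2 * K / \<beta>\<rceil> + 1"] allI impI ballI)
    show "\<beta> / (2 * M) > 0" using \<open>\<beta> > 0\<close> \<open>M > 0\<close> by simp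
    fix n :: nat and P :: "nat \<Rightarrow> nat set" and E :: "nat set set" and v :: nat
    assume n: "nat \<lceil>2 * K / \<beta>\<rceil> + 1 \<le> n"
      and H: "kpartite_kgraph k P E" "\<forall>i<k. card (P i) = n" "\<alpha> * real n \<le> real (min_codeg k P E)"
        "v \<in> vset k P"
    have "\<beta> / 2 * real n ^ (k * m - 1) \<le> \<beta> * real n ^ (k * m - 1) - K * real n ^ (k * m - 2)"
      unfolding exponent using \<open>\<beta> > 0\<close> n by (intro lower_order_term_absorbed) linarith+
    also have "\<dots> \<le> real (card {c \<in> copies (vset k P) E (vset k PF) EF. v \<in> fst c}) * M"
      using copies_through_vertex_lower[OF _ assms(2) _ assms(5,6) H(1,2) _ H(3,4)] assms(1,3) n
      by (simp add: \<beta>_def K_def M_def)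
    finally show "\<beta> / (2 * M) * real n ^ (k * m - 1)
        \<le> real (card {c \<in> copies (vset k P) E (vset k PF) EF. v \<in> fst c})"
      using \<open>M > 0\<close> by (simp add: field_simps)
  qed
qed

end
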